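(* Let $n\ge3$ and $y=(y_1,\dots,y_{n-1},q)\in\mathcal J_n$. Then $$\mathcal C_{\widetilde{\mathbb G}_n}(0,y)=\mathcal L_{\widetilde{\mathbb G}_n}(0,y)=\max_{1\le j\le n-1}\tanh^{-1}\left(\frac{\binom nj|y_j-\bar y_{n-j}q|+|y_jy_{n-j}-\binom nj^2q|}{\binom nj^2-|y_{n-j}|^2}\right),$$ where $0=(0,\dots,0)$.
   Context: $\mathbb D$ open unit disc. $\widetilde{\mathbb G}_n=\{(y_1,\dots,y_{n-1},q)\in\mathbb C^n: q\in\mathbb D,\ y_j=\beta_j+\bar\beta_{n-j}q$ with $\beta_j\in\mathbb C$, $|\beta_j|+|\beta_{n-j}|<\binom nj$, $j=1,\dots,n-1\}$. $\mathcal J_n$: for $n$ odd, the set of $y\in\widetilde{\mathbb G}_n$ with $y_j=\frac{\binom nj}ny_1$, $y_{n-j}=\frac{\binom nj}ny_{n-1}$ for $j=2,\dots,[n/2]$; for $n$ even, the set of $y\in\widetilde{\mathbb G}_n$ with $y_{n/2}=\frac{\binom{n}{n/2}}n\cdot\frac{y_1+y_{n-1}}2$ and $y_j=\frac{\binom nj}ny_1$, $y_{n-j}=\frac{\binom nj}ny_{n-1}$ for $j=2,\dots,n/2-1$. $\rho$ is the hyperbolic distance on $\mathbb D$, $\rho(a,b)=\tanh^{-1}\left|\frac{a-b}{1-\bar ba}\right|$. For a domain $\Omega$ and $z,w\in\Omega$: Carathéodory pseudodistance $\mathcal C_\Omega(z,w)=\sup\{\rho(f(z),f(w)): f:\Omega\to\mathbb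 D\text{ holomorphic}\}$; Lempert function $\mathcal L_\Omega(z,w)=\inf\{\rho(\alpha,\beta):\exists f:\mathbb D\to\Omega\text{ holomorphic},\ f(\alpha)=z,\ f(\beta)=w\}$. *)

theory Defs
  imports "HOL-Analysis.Analysis"
begin

text \<open>Points of C^n are modelled as vectors of type complex^'n, where the
finite index type 'n is identified with {1..n} via a bijection idx.
Coordinate j (1 \<le> j \<le> n) of z is z $ (inv idx j); coordinate n is q.\<close>

definition coord :: "('n \<Rightarrow> nat) \<Rightarrow> complex^'n \<Rightarrow> nat \<Rightarrow> complex" where
  "coord idx z j = z $ (inv idx j)"

definition cbin :: "nat \<Rightarrow> nat \<Rightarrow> complex" where
  "cbin n j = of_nat (n choose j)"

definition Gtilde :: "nat \<Rightarrow> ('n \<Rightarrow> nat) \<Rightarrow> (complex^'n) set" where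
  "Gtilde n idx = {z. norm (coord idx z n) < 1 \<and>
     (\<exists>\<beta> :: nat \<Rightarrow> complex. \<forall>j\<in>{1..n-1}.
        coord idx z j = \<beta> j + cnj (\<beta> (n - j)) * coord idx z n \<and>
        norm (\<beta> j) + norm (\<beta> (n - j)) < real (n choose j))}"

definition Jset :: "nat \<Rightarrow> ('n \<Rightarrow> nat) \<Rightarrow> (complex^'n) set" where
  "Jset n idx = {z \<in> Gtilde n idx.
     (if odd n then
        (\<forall>j\<in>{2..n div 2}. coord idx z j = cbin n j / of_nat n * coord idx z 1 \<and>
                          coord idx z (n - j) = cbin n j / of_nat n * coord idx z (n - 1))
      else
        coord idx z (n div 2) = cbin n (n div 2) / of_nat n *
              ((coord idx z 1 + coord idx z (n - 1)) / 2) \<and>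
        (\<forall>j\<in>{2..n div 2 - 1}. coord idx z j = cbin n j / of_nat n * coord idx z 1 \<and>
                          coord idx z (n - j) = cbin n j / of_nat n * coord idx z (n - 1)))}"

definition hrho :: "complex \<Rightarrow> complex \<Rightarrow> real" where
  "hrho a b = artanh (norm ((a - b) / (1 - cnj b * a)))"

definition cscale :: "complex \<Rightarrow> complex^'n \<Rightarrow> complex^'n" where
  "cscale c v = (\<chi> i. c * v $ i)"

definition holo_on :: "(complex^'n \<Rightarrow> complex) \<Rightarrow> (complex^'n) set \<Rightarrow> bool" where
  "holo_on f S \<longleftrightarrow> (\<forall>z\<in>S. \<exists>D. (f has_derivative D) (at z) \<and>
       (\<forall>c v. D (cscale c v) = c * D v))"

definition holo_curve_on :: "(complex \<Rightarrow> complex^'n) \<Rightarrow> complex set \<Rightarrow> bool" where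
  "holo_curve_on g S \<longleftrightarrow> (\<forall>i. (\<lambda>t. g t $ i) holomorphic_on S)"

definition caratheodory :: "(complex^'n) set \<Rightarrow> complex^'n \<Rightarrow> complex^'n \<Rightarrow> ereal" where
  "caratheodory \<Omega> z w =
     (SUP f \<in> {f. holo_on f \<Omega> \<and> f ` \<Omega> \<subseteq> ball 0 1}. ereal (hrho (f z) (f w)))"

definition lempert :: "(complex^'n) set \<Rightarrow> complex^'n \<Rightarrow> complex^'n \<Rightarrow> ereal" where
  "lempert \<Omega> z w =
     (INF ab \<in> {(a, b). a \<in> ball 0 1 \<and> b \<in> ball 0 1 \<and>
                 (\<exists>g. holo_curve_on g (ball 0 1) \<and> g ` ball 0 1 \<subseteq> \<Omega> \<and> g a = z \<and> g b = w)}.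
        ereal (hrho (fst ab) (snd ab)))"

end

theory Submission
  imports Defs "HOL-Complex_Analysis.Complex_Analysis"
begin

(* Caratheodory <= Lempert holds on every domain by the Schwarz-Pick lemma.

   Lower bound: for each j, with c = binom(n,j), the functions
   Psi_w(z) = (c q w - z_j) / (z_(n-j) w - c), |w| = 1, map G~_n into the disc and vanish at 0,
   because z_j = b_j + cnj(b_(n-j)) q with |b_j| + |b_(n-j)| < c.  A suitable w makes |Psi_w(y)|
   equal to the j-th quantity of the formula.

   Upper bound: a point y of J_n is the image of the tetrablock point (y_1/n, y_(n-1)/n, q) under
   a linear map sending the tetrablock into G~_n.  An explicit analytic disc of the tetrablock
   passes through 0 and through this point, at a parameter whose modulus is the j = 1 or the
   j = n-1 quantity; its lift gives the matching bound for the Lempert function. *)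

section \<open>Holomorphic maps of several variables\<close>

definition holo_at :: "(complex^'n \<Rightarrow> complex) \<Rightarrow> complex^'n \<Rightarrow> bool" where
  "holo_at f z \<longleftrightarrow> (\<exists>D. (f has_derivative D) (at z) \<and> (\<forall>c v. D (cscale c v) = c * D v))"

lemma holo_on_iff_holo_at: "holo_on f S \<longleftrightarrow> (\<forall>z\<in>S. holo_at f z)"
  unfolding holo_on_def holo_at_def ..

lemma holo_at_component: "holo_at (\<lambda>z. z $ i) z"
  unfolding holo_at_def cscale_def
  using bounded_linear_imp_has_derivative[OF bounded_linear_vec_nth] by fastforce

lemma holo_at_const: "holo_at (\<lambda>z. c) z"
  unfolding holo_at_def by (intro exI[of _ "\<lambda>_. 0"]) simp

lemma holo_at_diff:
  assumes "holo_at f z" and "holo_at g z"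
  shows "holo_at (\<lambda>x. f x - g x) z"
proof -
  obtain Df Dg where "(f has_derivative Df) (at z)" "\<forall>c v. Df (cscale c v) = c * Df v"
    and "(g has_derivative Dg) (at z)" "\<forall>c v. Dg (cscale c v) = c * Dg v"
    using assms unfolding holo_at_def by blast
  then show ?thesis
    unfolding holo_at_def
    by (intro exI[of _ "\<lambda>h. Df h - Dg h"]) (auto intro: has_derivative_diff simp: algebra_simps)
qed

lemma holo_at_mult:
  assumes "holo_at f z" and "holo_at g z"
  shows "holo_at (\<lambda>x. f x * g x) z"
proof -
  obtain Df Dg where "(f has_derivative Df) (at z)" "\<forall>c v. Df (cscale c v) = c * Df v"
    and "(g has_derivative Dg) (at z)" "\<forall>c v. Dg (cscale c v) = c * Dg v"
    using assms unfolding holo_at_def by blast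
  then show ?thesis
    unfolding holo_at_def
    by (intro exI[of _ "\<lambda>h. f z * Dg h + Df h * g z"] conjI has_derivative_mult)
       (simp_all add: algebra_simps)
qed

lemma holo_at_divide:
  assumes "holo_at f z" and "holo_at g z" and "g z \<noteq> 0"
  shows "holo_at (\<lambda>x. f x / g x) z"
proof -
  obtain Df Dg where "(f has_derivative Df) (at z)" "\<forall>c v. Df (cscale c v) = c * Df v"
    and "(g has_derivative Dg) (at z)" "\<forall>c v. Dg (cscale c v) = c * Dg v"
    using assms(1,2) unfolding holo_at_def by blast
  then show ?thesis
    unfolding holo_at_def using assms(3)
    by (intro exI[of _ "\<lambda>h. (Df h * g z - f z * Dg h) / (g z * g z)"] conjI has_derivative_divide')
       (simp_all add: algebra_simps diff_divide_distrib)
qed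

lemma has_derivative_vec_curve:
  fixes g :: "complex \<Rightarrow> complex^'n"
  assumes "\<And>i. ((\<lambda>t. g t $ i) has_field_derivative d i) (at t)"
  shows "(g has_derivative (\<lambda>s. cscale s (\<chi> i. d i))) (at t)"
proof -
  have "linear (\<lambda>s::complex. cscale s (\<chi> i. d i))"
    by (rule linearI) (simp_all add: cscale_def vec_eq_iff algebra_simps)
  then have "bounded_linear (\<lambda>s::complex. cscale s (\<chi> i. d i))"
    by (simp add: linear_conv_bounded_linear)
  moreover have "((\<lambda>y. ((g y $ i - g t $ i) - (y - t) * d i) /\<^sub>R norm (y - t)) \<longlongrightarrow> 0) (at t)" for i
    using assms[of i]
    unfolding has_field_derivative_def has_derivative_at_within by (simp add: mult.commute)
  then have "((\<lambda>y. ((g y - g t) - cscale (y - t) (\<chi> i. d i)) /\<^sub>R norm (y - t)) \<longlongrightarrow> 0) (at t)"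
    by (intro vec_tendstoI) (simp add: cscale_def)
  ultimately show ?thesis unfolding has_derivative_at_within by simp
qed

lemma holomorphic_on_compose_holo_curve:
  fixes f :: "complex^'n \<Rightarrow> complex" and g :: "complex \<Rightarrow> complex^'n"
  assumes f: "holo_on f \<Omega>" and g: "holo_curve_on g S" and S: "open S" and gS: "g ` S \<subseteq> \<Omega>"
  shows "(\<lambda>t. f (g t)) holomorphic_on S"
  unfolding holomorphic_on_def
proof
  fix t assume t: "t \<in> S"
  have "\<exists>d. ((\<lambda>t. g t $ i) has_field_derivative d) (at t)" for i
    using g holomorphic_on_imp_differentiable_at[OF _ S t]
    unfolding holo_curve_on_def field_differentiable_def by blast
  then obtain d where d: "\<And>i. ((\<lambda>t. g t $ i) has_field_derivative d i) (at t)" by metis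
  obtain D where D: "(f has_derivative D) (at (g t))" and lin: "\<forall>c v. D (cscale c v) = c * D v"
    using f gS t unfolding holo_on_def by blast
  have "((\<lambda>t. f (g t)) has_derivative (\<lambda>s. D (cscale s (\<chi> i. d i)))) (at t)"
    using has_derivative_compose[OF has_derivative_vec_curve[OF d] D] by (simp add: o_def)
  moreover have "(\<lambda>s. D (cscale s (\<chi> i. d i))) = (*) (D (\<chi> i. d i))"
    using lin by (auto simp: fun_eq_iff mult.commute)
  ultimately show "(\<lambda>t. f (g t)) field_differentiable at t within S"
    unfolding field_differentiable_def has_field_derivative_def
    using has_derivative_at_withinI by fastforce
qed

section \<open>Caratheodory pseudodistance and Lempert function\<close>

lemma artanh_mono:
  fixes x y :: real
  assumes "-1 < x" and "x \<le> y" and "y < 1"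
  shows "artanh x \<le> artanh y"
proof -
  have "(1 + x) / (1 - x) \<le> (1 + y) / (1 - y)"
    using assms by (simp add: divide_simps) (simp add: algebra_simps)
  moreover have "0 < (1 + x) / (1 - x)" using assms by simp
  ultimately show ?thesis unfolding artanh_def by simp
qed

lemma hrho_0: "hrho 0 z = artanh (norm z)"
  unfolding hrho_def by simp

lemma hrho_eq_Moebius: "hrho x y = artanh (norm (Moebius_function 0 x y))"
proof -
  have "norm (1 - cnj y * x) = norm (1 - cnj x * y)"
    by (metis complex_cnj_cnj complex_cnj_diff complex_cnj_mult complex_cnj_one complex_mod_cnj mult.commute)
  then show ?thesis
    unfolding hrho_def Moebius_function_simple by (simp add: norm_divide norm_minus_commute)
qed

lemma hrho_Schwarz_Pick:
  assumes h: "h holomorphic_on ball 0 1" and hb: "h ` ball 0 1 \<subseteq> ball 0 1"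
    and a: "a \<in> ball 0 1" and b: "b \<in> ball 0 1"
  shows "hrho (h a) (h b) \<le> hrho a b"
proof -
  have "h a \<in> ball 0 1" using a hb by blast
  then have na: "norm a < 1" and nb: "norm b < 1" and nha: "norm (h a) < 1"
    using a b by auto
  have M: "Moebius_function 0 (- a) ` ball 0 1 \<subseteq> ball 0 1"
    using Moebius_function_norm_lt_1[of "- a"] na by auto
  define F where "F = Moebius_function 0 (h a) \<circ> h \<circ> Moebius_function 0 (- a)"
  define \<xi> where "\<xi> = Moebius_function 0 a b"
  have h1: "(Moebius_function 0 (h a) \<circ> h) holomorphic_on ball 0 1"
    by (rule holomorphic_on_compose_gen[OF h Moebius_function_holomorphic[OF nha] hb])
  have "F holomorphic_on ball 0 1"
    unfolding F_def
    by (rule holomorphic_on_compose_gen[OF Moebius_function_holomorphic h1 M]) (use na in simp)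
  moreover have "F 0 = 0" by (simp add: F_def Moebius_function_simple)
  moreover have "norm (F z) < 1" if "norm z < 1" for z
  proof -
    have "z \<in> ball 0 1" using that by simp
    then have "Moebius_function 0 (- a) z \<in> ball 0 1" using M by blast
    then have "h (Moebius_function 0 (- a) z) \<in> ball 0 1" using hb by blast
    then have "norm (Moebius_function 0 (h a) (h (Moebius_function 0 (- a) z))) < 1"
      by (intro Moebius_function_norm_lt_1[OF nha]) simp
    then show ?thesis by (simp only: F_def o_def)
  qed
  moreover have \<xi>: "norm \<xi> < 1"
    unfolding \<xi>_def using Moebius_function_norm_lt_1[OF na nb] .
  ultimately have "norm (F \<xi>) \<le> norm \<xi>"
    by (rule Schwarz_Lemma(1))
  moreover have "Moebius_function 0 (- a) \<xi> = b"
    unfolding \<xi>_def by (rule Moebius_function_compose) (use na nb in auto)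
  ultimately have "norm (Moebius_function 0 (h a) (h b)) \<le> norm \<xi>"
    unfolding F_def by simp
  moreover have "-1 < norm (Moebius_function 0 (h a) (h b))"
    using norm_ge_zero[of "Moebius_function 0 (h a) (h b)"] by linarith
  ultimately show ?thesis
    unfolding hrho_eq_Moebius \<xi>_def[symmetric] using \<xi> by (intro artanh_mono)
qed

lemma hrho_le_caratheodory:
  assumes "holo_on f \<Omega>" and "f ` \<Omega> \<subseteq> ball 0 1"
  shows "ereal (hrho (f z) (f w)) \<le> caratheodory \<Omega> z w"
  unfolding caratheodory_def using assms by (intro SUP_upper) auto

lemma lempert_le_hrho:
  assumes "holo_curve_on g (ball 0 1)" and "g ` ball 0 1 \<subseteq> \<Omega>"
    and "a \<in> ball 0 1" and "b \<in> ball 0 1" and "g a = z" and "g b = w"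
  shows "lempert \<Omega> z w \<le> ereal (hrho a b)"
  unfolding lempert_def using assms by (intro INF_lower2[of "(a, b)"]) auto

lemma caratheodory_le_lempert: "caratheodory \<Omega> z w \<le> lempert \<Omega> z w"
  unfolding caratheodory_def lempert_def
proof (intro SUP_least INF_greatest)
  fix f ab
  assume "f \<in> {f. holo_on f \<Omega> \<and> f ` \<Omega> \<subseteq> ball 0 1}"
    and "ab \<in> {(a, b). a \<in> ball 0 1 \<and> b \<in> ball 0 1 \<and>
          (\<exists>g. holo_curve_on g (ball 0 1) \<and> g ` ball 0 1 \<subseteq> \<Omega> \<and> g a = z \<and> g b = w)}"
  then obtain a b g where ab: "ab = (a, b)" "a \<in> ball 0 1" "b \<in> ball 0 1"
    and g: "holo_curve_on g (ball 0 1)" "g ` ball 0 1 \<subseteq> \<Omega>" "g a = z" "g b = w"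
    and f: "holo_on f \<Omega>" "f ` \<Omega> \<subseteq> ball 0 1"
    by blast
  have "(\<lambda>t. f (g t)) holomorphic_on ball 0 1"
    using holomorphic_on_compose_holo_curve[OF f(1) g(1) open_ball g(2)] .
  moreover have "(\<lambda>t. f (g t)) ` ball 0 1 \<subseteq> ball 0 1" using f(2) g(2) by blast
  ultimately have "hrho (f (g a)) (f (g b)) \<le> hrho a b"
    using ab by (intro hrho_Schwarz_Pick) auto
  then show "ereal (hrho (f z) (f w)) \<le> ereal (hrho (fst ab) (snd ab))"
    using g ab by simp
qed

section \<open>The functions Psi\<close>

lemma unit_mult_cnj: "norm w = 1 \<Longrightarrow> w * cnj w = 1"
  by (metis complex_norm_square of_real_1 power_one)

lemma norm_add_cnj_mult_less:
  fixes b1 b2 q :: complex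
  assumes "norm b1 + norm b2 < c" and "norm q < 1"
  shows "norm (b1 + cnj b2 * q) < c"
proof -
  have "norm (b1 + cnj b2 * q) \<le> norm b1 + norm b2 * norm q"
    by (metis complex_mod_cnj norm_mult norm_triangle_ineq)
  also have "\<dots> \<le> norm b1 + norm b2"
    using assms(2) by (simp add: mult_left_le less_imp_le)
  finally show ?thesis using assms(1) by simp
qed

lemma exists_unit_mult_aligned:
  fixes K L :: complex
  assumes "K \<noteq> 0"
  obtains z where "norm z = 1" and "L * z = complex_of_real (norm L / norm K) * K"
proof (cases "L = 0")
  case True
  then show ?thesis using that[of 1] by simp
next
  case False
  define z where "z = K * cnj L / (norm K * norm L)"
  have "norm z = 1" using assms False by (simp add: z_def norm_mult norm_divide)
  moreover have "L * z = complex_of_real (norm L / norm K) * K"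
    using assms False unfolding z_def
    by (simp add: field_simps complex_norm_square[symmetric] power2_eq_square)
  ultimately show ?thesis using that by blast
qed

lemma exists_unit_norm_add_mult:
  fixes K L :: complex
  obtains z where "norm z = 1" and "norm (K + L * z) = norm K + norm L"
proof (cases "K = 0")
  case True
  then show ?thesis using that[of 1] by simp
next
  case False
  then obtain z where z: "norm z = 1" "L * z = complex_of_real (norm L / norm K) * K"
    by (rule exists_unit_mult_aligned)
  then have "K + L * z = complex_of_real (1 + norm L / norm K) * K"
    by (simp add: algebra_simps)
  then have "norm (K + L * z) = (1 + norm L / norm K) * norm K"
    by (simp only: norm_mult norm_of_real) (simp add: abs_of_nonneg)
  also have "\<dots> = norm K + norm L"
    using False by (simp add: field_simps)
  finally have "norm (K + L * z) = norm K + norm L" .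
  with z show ?thesis using that by blast
qed

lemma unit_moebius:
  fixes v z \<omega> :: complex and c :: real
  assumes v: "norm v < c" and z: "norm z = 1"
  defines "\<omega> \<equiv> (c * z + cnj v) / (c + v * z)"
  shows "c + v * z \<noteq> 0" and "norm \<omega> = 1"
    and "c - v * \<omega> = ((complex_of_real c)^2 - v * cnj v) / (c + v * z)"
    and "c * \<omega> - cnj v = z * ((complex_of_real c)^2 - v * cnj v) / (c + v * z)"
proof -
  show nz: "c + v * z \<noteq> 0"
  proof
    assume "c + v * z = 0"
    then have "norm (complex_of_real c) = norm (v * z)" by (metis add_eq_0_iff norm_minus_cancel)
    then show False using v z by (simp add: norm_mult)
  qed
  have "c * z + cnj v = z * cnj (c + v * z)"
    using unit_mult_cnj[OF z] by (simp add: algebra_simps)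
  then have "norm (c * z + cnj v) = norm z * norm (c + v * z)"
    by (simp only: norm_mult complex_mod_cnj)
  then have "norm (c * z + cnj v) = norm (c + v * z)"
    using z by simp
  then show "norm \<omega> = 1" using nz by (simp add: \<omega>_def norm_divide)
  show "c - v * \<omega> = ((complex_of_real c)^2 - v * cnj v) / (c + v * z)"
    using nz by (simp add: \<omega>_def field_simps power2_eq_square)
  show "c * \<omega> - cnj v = z * ((complex_of_real c)^2 - v * cnj v) / (c + v * z)"
    using nz by (simp add: \<omega>_def field_simps power2_eq_square)
qed

definition Psi :: "real \<Rightarrow> complex \<Rightarrow> complex \<Rightarrow> complex \<Rightarrow> complex \<Rightarrow> complex" where
  "Psi c \<omega> u v q = (c * q * \<omega> - u) / (v * \<omega> - c)"

(* The closed form of the maximum of |Psi c w u v q| over |w| = 1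
   (exists_unit_norm_Psi_eq_sup_Psi). *)
definition sup_Psi :: "real \<Rightarrow> complex \<Rightarrow> complex \<Rightarrow> complex \<Rightarrow> real" where
  "sup_Psi c u v q =
     (c * norm (u - cnj v * q) + norm (u * v - (complex_of_real c)^2 * q)) / (c^2 - (norm v)^2)"

lemma Psi_norm_identity:
  fixes b1 b2 q \<omega> :: complex and c :: real
  assumes "norm \<omega> = 1"
  shows "(norm ((b2 + cnj b1 * q) * \<omega> - c))^2 - (norm (c * q * \<omega> - (b1 + cnj b2 * q)))^2
       = (1 - (norm q)^2) * ((norm (c - b2 * \<omega>))^2 - (norm b1)^2)"
proof -
  have "complex_of_real ((norm ((b2 + cnj b1 * q) * \<omega> - c))^2 - (norm (c * q * \<omega> - (b1 + cnj b2 * q)))^2)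
      = complex_of_real ((1 - (norm q)^2) * ((norm (c - b2 * \<omega>))^2 - (norm b1)^2))"
    unfolding of_real_diff of_real_mult complex_norm_square of_real_1
    using unit_mult_cnj[OF assms] by (simp add: algebra_simps) algebra
  then show ?thesis by (simp only: of_real_eq_iff)
qed

lemma norm_Psi_less_1:
  fixes b1 b2 q \<omega> :: complex and c :: real
  assumes bc: "norm b1 + norm b2 < c" and q: "norm q < 1" and \<omega>: "norm \<omega> = 1"
  shows "(b2 + cnj b1 * q) * \<omega> - c \<noteq> 0"
    and "norm (Psi c \<omega> (b1 + cnj b2 * q) (b2 + cnj b1 * q) q) < 1"
proof -
  have "norm b1 < c - norm b2" using bc by simp
  also have "\<dots> \<le> norm (c - b2 * \<omega>)"
    using norm_triangle_ineq2[of "complex_of_real c" "b2 * \<omega>"] bc \<omega>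
    by (simp add: norm_mult abs_of_pos)
  finally have "(norm b1)^2 < (norm (c - b2 * \<omega>))^2"
    by (simp add: power_strict_mono)
  moreover have "0 < 1 - (norm q)^2" using q by (simp add: power_less_one_iff)
  ultimately have "(norm (c * q * \<omega> - (b1 + cnj b2 * q)))^2 < (norm ((b2 + cnj b1 * q) * \<omega> - c))^2"
    using Psi_norm_identity[OF \<omega>, of b2 b1 q c] by (smt (verit) mult_pos_pos)
  then have lt: "norm (c * q * \<omega> - (b1 + cnj b2 * q)) < norm ((b2 + cnj b1 * q) * \<omega> - c)"
    by (meson norm_ge_zero power_less_imp_less_base)
  then show "(b2 + cnj b1 * q) * \<omega> - c \<noteq> 0" by auto
  with lt show "norm (Psi c \<omega> (b1 + cnj b2 * q) (b2 + cnj b1 * q) q) < 1"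
    by (simp add: Psi_def norm_divide divide_less_eq)
qed

(* Parametrising the unit circle by the Moebius image of z makes Psi affine in z. *)
lemma Psi_unit_moebius:
  fixes u v q z :: complex and c :: real
  assumes v: "norm v < c" and z: "norm z = 1"
  shows "Psi c ((c * z + cnj v) / (c + v * z)) u v q
       = (c * (u - cnj v * q) + (u * v - (complex_of_real c)^2 * q) * z) / ((complex_of_real c)^2 - v * cnj v)"
proof -
  define \<omega> where "\<omega> = (c * z + cnj v) / (c + v * z)"
  define D where "D = (complex_of_real c)^2 - v * cnj v"
  note m = unit_moebius[OF v z, folded \<omega>_def D_def]
  have "(norm v)^2 < c^2" using v by (simp add: power_strict_mono)
  then have "complex_of_real (c^2 - (norm v)^2) \<noteq> 0"
    by (simp only: of_real_eq_0_iff)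
  then have D: "D \<noteq> 0"
    unfolding D_def of_real_diff complex_norm_square by simp
  have "c * q * \<omega> - u = q * (c * \<omega> - cnj v) - (u - cnj v * q)"
    by (simp add: algebra_simps)
  also have "\<dots> = q * (z * D / (c + v * z)) - (u - cnj v * q)"
    by (simp only: m(4))
  also have "\<dots> = (q * z * D - (u - cnj v * q) * (c + v * z)) / (c + v * z)"
    using m(1) by (simp add: field_simps)
  finally have num: "c * q * \<omega> - u = (q * z * D - (u - cnj v * q) * (c + v * z)) / (c + v * z)" .
  have den: "v * \<omega> - c = - (D / (c + v * z))"
    using m(3) by (simp add: algebra_simps)
  have "Psi c \<omega> u v q = ((u - cnj v * q) * (c + v * z) - q * z * D) / D"
    unfolding Psi_def num den using m(1) by (simp add: divide_simps)
  also have "\<dots> = (c * (u - cnj v * q) + (u * v - (complex_of_real c)^2 * q) * z) / D"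
    unfolding D_def by (simp add: algebra_simps power2_eq_square)
  finally show ?thesis unfolding \<omega>_def D_def .
qed

lemma exists_unit_norm_Psi_eq_sup_Psi:
  fixes u v q :: complex and c :: real
  assumes v: "norm v < c"
  obtains \<omega> where "norm \<omega> = 1" and "norm (Psi c \<omega> u v q) = sup_Psi c u v q"
proof -
  have c: "c > 0" using v by (meson le_less_trans norm_ge_zero)
  have d: "complex_of_real (c^2 - (norm v)^2) = (complex_of_real c)^2 - v * cnj v"
    unfolding of_real_diff complex_norm_square by simp
  have dpos: "c^2 - (norm v)^2 > 0" using v by (simp add: power_strict_mono)
  have nd: "norm ((complex_of_real c)^2 - v * cnj v) = c^2 - (norm v)^2"
    using d dpos by (metis abs_of_pos norm_of_real)
  define K where "K = c * (u - cnj v * q) / ((complex_of_real c)^2 - v * cnj v)"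
  define L where "L = (u * v - (complex_of_real c)^2 * q) / ((complex_of_real c)^2 - v * cnj v)"
  obtain z where z: "norm z = 1" "norm (K + L * z) = norm K + norm L"
    by (rule exists_unit_norm_add_mult)
  have "Psi c ((c * z + cnj v) / (c + v * z)) u v q = K + L * z"
    unfolding Psi_unit_moebius[OF v z(1)] K_def L_def by (simp add: add_divide_distrib)
  moreover have "norm K + norm L = sup_Psi c u v q"
    unfolding K_def L_def sup_Psi_def norm_divide norm_mult nd
    using c by (simp add: add_divide_distrib)
  ultimately show ?thesis
    using that unit_moebius(2)[OF v z(1)] z(2) by metis
qed

lemma sup_Psi_less_1:
  fixes b1 b2 q :: complex and c :: real
  assumes bc: "norm b1 + norm b2 < c" and q: "norm q < 1"
  shows "sup_Psi c (b1 + cnj b2 * q) (b2 + cnj b1 * q) q < 1"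
proof -
  have "norm (b2 + cnj b1 * q) < c"
    using bc q by (intro norm_add_cnj_mult_less) simp_all
  then obtain \<omega> where \<omega>: "norm \<omega> = 1"
    and eq: "norm (Psi c \<omega> (b1 + cnj b2 * q) (b2 + cnj b1 * q) q) = sup_Psi c (b1 + cnj b2 * q) (b2 + cnj b1 * q) q"
    by (rule exists_unit_norm_Psi_eq_sup_Psi)
  then show ?thesis using norm_Psi_less_1(2)[OF bc q \<omega>] eq by simp
qed

lemma sup_Psi_scale:
  fixes a b q :: complex and c :: real
  assumes c: "c > 0"
  shows "sup_Psi c (c * a) (c * b) q = sup_Psi 1 a b q"
proof -
  have "norm (c * a - cnj (c * b) * q) = c * norm (a - cnj b * q)"
  proof -
    have "c * a - cnj (c * b) * q = c * (a - cnj b * q)" by (simp add: algebra_simps)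
    then show ?thesis using c by (simp add: norm_mult)
  qed
  moreover have "norm (c * a * (c * b) - (complex_of_real c)^2 * q) = c^2 * norm (a * b - q)"
  proof -
    have "c * a * (c * b) - (complex_of_real c)^2 * q = (complex_of_real c)^2 * (a * b - q)"
      by (simp add: algebra_simps power2_eq_square)
    then show ?thesis by (simp add: norm_mult norm_power)
  qed
  moreover have "(norm (c * b))^2 = c^2 * (norm b)^2"
    using c by (simp add: norm_mult power_mult_distrib)
  moreover have "(c * (c * X) + c^2 * Y) / (c^2 - c^2 * Z) = (X + Y) / (1 - Z)" for X Y Z :: real
  proof -
    have "(c * (c * X) + c^2 * Y) / (c^2 - c^2 * Z) = (c^2 * (X + Y)) / (c^2 * (1 - Z))"
      by (simp add: algebra_simps power2_eq_square)
    then show ?thesis using c by simp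
  qed
  ultimately show ?thesis unfolding sup_Psi_def by simp
qed

section \<open>Extremal discs of the tetrablock\<close>

(* One of the equivalent descriptions of the tetrablock (Abouhajar, White and Young). *)
definition in_tetrablock :: "complex \<Rightarrow> complex \<Rightarrow> complex \<Rightarrow> bool" where
  "in_tetrablock u v q \<longleftrightarrow>
     norm q < 1 \<and> 2 * norm (u * v - q) < 1 - (norm u)^2 - (norm v)^2 + (norm q)^2"

lemma in_tetrablock_commute: "in_tetrablock u v q \<longleftrightarrow> in_tetrablock v u q"
  unfolding in_tetrablock_def by (auto simp: mult.commute)

lemma tetrablock_identity_diff:
  "(norm (u - cnj v * q))^2 - (norm (v - cnj u * q))^2 = ((norm u)^2 - (norm v)^2) * (1 - (norm q)^2)"
proof -
  have "complex_of_real ((norm (u - cnj v * q))^2 - (norm (v - cnj u * q))^2) =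
        complex_of_real (((norm u)^2 - (norm v)^2) * (1 - (norm q)^2))"
    unfolding of_real_diff of_real_mult complex_norm_square of_real_1
    by (simp only: complex_cnj_diff complex_cnj_mult complex_cnj_cnj) algebra
  then show ?thesis by (simp only: of_real_eq_iff)
qed

lemma tetrablock_identity_sum:
  "(1 - (norm q)^2)^2 - (norm (u - cnj v * q))^2 - (norm (v - cnj u * q))^2
   = (1 + (norm q)^2) * (1 + (norm q)^2 - (norm u)^2 - (norm v)^2)
     + 2 * ((norm u)^2 * (norm v)^2 - (norm q)^2 - (norm (u * v - q))^2)"
proof -
  have "complex_of_real ((1 - (norm q)^2)^2 - (norm (u - cnj v * q))^2 - (norm (v - cnj u * q))^2)
   = complex_of_real ((1 + (norm q)^2) * (1 + (norm q)^2 - (norm u)^2 - (norm v)^2)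
     + 2 * ((norm u)^2 * (norm v)^2 - (norm q)^2 - (norm (u * v - q))^2))"
    apply (simp only: of_real_diff of_real_mult of_real_add of_real_1 of_real_numeral of_real_power)
    apply (simp only: of_real_power[symmetric] complex_norm_square)
    apply (simp only: complex_cnj_diff complex_cnj_mult complex_cnj_cnj)
    by algebra
  then show ?thesis by (simp only: of_real_eq_iff)
qed

lemma tetrablock_identity_Re:
  "(norm u)^2 * (norm v)^2 - (norm q)^2 - (norm (u * v - q))^2 = 2 * Re (cnj q * (u * v - q))"
proof -
  have "complex_of_real ((norm u)^2 * (norm v)^2 - (norm q)^2 - (norm (u * v - q))^2)
      = cnj q * (u * v - q) + cnj (cnj q * (u * v - q))"
    unfolding of_real_diff of_real_mult complex_norm_square by (simp add: algebra_simps)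
  then show ?thesis by (simp only: complex_add_cnj of_real_eq_iff)
qed

lemma tetrablock_discriminant:
  "((1 - (norm q)^2)^2 - (norm (u - cnj v * q))^2 - (norm (v - cnj u * q))^2)^2
     - 4 * (norm (u - cnj v * q))^2 * (norm (v - cnj u * q))^2
   = (1 - (norm q)^2)^2 * ((1 + (norm q)^2 - (norm u)^2 - (norm v)^2)^2 - 4 * (norm (u * v - q))^2)"
proof -
  have poly: "(R^2 - X - Y)^2 - 4 * X * Y = R^2 * ((1 + Q - U - V)^2 - 4 * P)"
    if "X - Y = (U - V) * R" "R^2 - X - Y = (1 + Q) * (1 + Q - U - V) + 2 * (U * V - Q - P)"
       "R = 1 - Q" for X Y U V Q P R :: real
    using that by algebra
  show ?thesis
    by (rule poly[OF tetrablock_identity_diff tetrablock_identity_sum]) simp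
qed

lemma add_less_of_square_gap:
  fixes x y R :: real
  assumes "0 \<le> x" "0 \<le> y" "0 < R" "0 < R^2 - x^2 - y^2" "4 * x^2 * y^2 < (R^2 - x^2 - y^2)^2"
  shows "x + y < R"
proof -
  have "(2 * x * y)^2 < (R^2 - x^2 - y^2)^2" using assms(5) by (simp add: power_mult_distrib)
  then have "2 * x * y < R^2 - x^2 - y^2"
    using assms(4) by (meson less_imp_le power_less_imp_less_base)
  then have "(x + y)^2 < R^2" by (simp add: power2_sum)
  then show ?thesis using assms(3) by (meson less_imp_le power_less_imp_less_base)
qed

lemma in_tetrablock_norm_add_less:
  assumes "in_tetrablock u v q"
  shows "norm (u - cnj v * q) + norm (v - cnj u * q) < 1 - (norm q)^2"
proof -
  define p where "p = norm (u * v - q)"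
  define m where "m = 1 + (norm q)^2 - (norm u)^2 - (norm v)^2"
  define R where "R = 1 - (norm q)^2"
  define A where "A = R^2 - (norm (u - cnj v * q))^2 - (norm (v - cnj u * q))^2"
  have q: "norm q < 1" and mp: "2 * p < m"
    using assms unfolding in_tetrablock_def p_def m_def by auto
  have R: "R > 0" unfolding R_def using q by (simp add: power_less_one_iff)
  have A: "A = (1 + (norm q)^2) * m + 2 * ((norm u)^2 * (norm v)^2 - (norm q)^2 - p^2)"
    unfolding A_def R_def m_def p_def by (rule tetrablock_identity_sum)
  have Re: "2 * ((norm u)^2 * (norm v)^2 - (norm q)^2 - p^2) \<ge> - (2 * norm q * (2 * p))"
    using abs_Re_le_cmod[of "cnj q * (u * v - q)"]
    unfolding p_def tetrablock_identity_Re by (simp add: norm_mult)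
  have "2 * norm q \<le> 1 + (norm q)^2"
    using zero_le_power2[of "1 - norm q"] by (simp add: power2_eq_square algebra_simps)
  then have "2 * norm q * (2 * p) \<le> (1 + (norm q)^2) * (2 * p)"
    unfolding p_def by (intro mult_right_mono) auto
  moreover have "(1 + (norm q)^2) * (2 * p) < (1 + (norm q)^2) * m"
    using mp by (intro mult_strict_left_mono) (auto intro: add_pos_nonneg)
  ultimately have A_pos: "A > 0" unfolding A using Re by linarith
  have "A^2 - 4 * (norm (u - cnj v * q))^2 * (norm (v - cnj u * q))^2 = R^2 * (m^2 - 4 * p^2)"
    unfolding A_def R_def m_def p_def by (rule tetrablock_discriminant)
  moreover have "(2 * p)^2 < m^2"
    using mp unfolding p_def by (intro power_strict_mono) auto
  then have "0 < R^2 * (m^2 - 4 * p^2)"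
    using R by (simp add: power_mult_distrib)
  ultimately have "4 * (norm (u - cnj v * q))^2 * (norm (v - cnj u * q))^2 < A^2"
    by linarith
  then show ?thesis
    using add_less_of_square_gap[OF norm_ge_zero norm_ge_zero R] A_pos
    unfolding A_def R_def by simp
qed

lemma in_tetrablock_obtain_beta:
  assumes "in_tetrablock u v q"
  obtains B1 B2 where "u = B1 + cnj B2 * q" and "v = B2 + cnj B1 * q" and "norm B1 + norm B2 < 1"
proof -
  define R where "R = 1 - (norm q)^2"
  have q: "norm q < 1" using assms unfolding in_tetrablock_def by simp
  then have R: "R > 0" unfolding R_def by (simp add: power_less_one_iff)
  have Rc: "complex_of_real R = 1 - q * cnj q"
    unfolding R_def of_real_diff complex_norm_square by simp
  define B1 where "B1 = (u - cnj v * q) / R"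
  define B2 where "B2 = (v - cnj u * q) / R"
  have R0: "complex_of_real R \<noteq> 0" using R by simp
  have "(u - cnj v * q) + cnj (v - cnj u * q) * q = u * R"
    and "(v - cnj u * q) + cnj (u - cnj v * q) * q = v * R"
    unfolding Rc by (simp_all add: algebra_simps)
  then have "u = B1 + cnj B2 * q" and "v = B2 + cnj B1 * q"
    unfolding B1_def B2_def using R0 by (simp_all add: field_simps)
  moreover have "norm B1 + norm B2 < 1"
    using in_tetrablock_norm_add_less[OF assms, folded R_def] R
    unfolding B1_def B2_def norm_divide norm_of_real
    by (simp add: add_divide_distrib[symmetric])
  ultimately show ?thesis using that by blast
qed

lemma in_tetrablock_divide:
  fixes a b c D :: complex
  assumes D: "D \<noteq> 0" and c: "norm c < norm D"
    and ineq: "2 * norm (a * b - c * D) < (norm D)^2 - (norm a)^2 - (norm b)^2 + (norm c)^2"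
  shows "in_tetrablock (a / D) (b / D) (c / D)"
proof -
  have "a / D * (b / D) - c / D = (a * b - c * D) / D^2"
    using D by (simp add: field_simps power2_eq_square)
  then have "2 * norm (a / D * (b / D) - c / D) = 2 * norm (a * b - c * D) / (norm D)^2"
    by (simp add: norm_divide norm_power)
  moreover have "1 - (norm (a / D))^2 - (norm (b / D))^2 + (norm (c / D))^2
      = ((norm D)^2 - (norm a)^2 - (norm b)^2 + (norm c)^2) / (norm D)^2"
    using D by (simp add: norm_divide power_divide diff_divide_distrib add_divide_distrib)
  ultimately show ?thesis
    using ineq c D unfolding in_tetrablock_def by (simp add: norm_divide divide_strict_right_mono)
qed

lemma extremal_disc_inequality:
  fixes \<sigma> s :: real and t :: complex
  assumes \<sigma>: "0 \<le> \<sigma>" "\<sigma> < 1" and s: "s < 1" and t: "norm t \<le> s"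
  shows "2 * (\<sigma> * s * (norm (1 - t))^2)
       < (norm (1 - \<sigma> * t))^2 - ((1 - \<sigma>) * s)^2 - ((1 - \<sigma>) * norm t)^2 + (s * norm (t - \<sigma>))^2"
proof -
  define P where "P = (1 - \<sigma>) * (1 - (norm t)^2) * (1 + s) + \<sigma> * (1 - s) * (norm (1 - t))^2"
  have "(norm (1 - \<sigma> * t))^2 - ((1 - \<sigma>) * s)^2 - ((1 - \<sigma>) * norm t)^2 + (s * norm (t - \<sigma>))^2
          - 2 * (\<sigma> * s * (norm (1 - t))^2) = (1 - s) * P"
    unfolding P_def cmod_power2 power_mult_distrib by (simp add: power2_eq_square) algebra
  moreover have "P > 0"
  proof -
    have "1 - (norm t)^2 > 0" using s t by (simp add: power_less_one_iff)
    moreover have "1 + s > 0" using t norm_ge_zero[of t] by linarith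
    ultimately have "(1 - \<sigma>) * (1 - (norm t)^2) * (1 + s) > 0" using \<sigma> by simp
    then show ?thesis unfolding P_def using \<sigma> s by (simp add: add_pos_nonneg)
  qed
  then have "(1 - s) * P > 0" using s by simp
  ultimately show ?thesis by linarith
qed

lemma norm_diff_real_less:
  fixes \<sigma> :: real and t :: complex
  assumes "\<bar>\<sigma>\<bar> < 1" and "norm t < 1"
  shows "norm (t - \<sigma>) < norm (1 - \<sigma> * t)"
proof -
  have "(norm (1 - \<sigma> * t))^2 - (norm (t - \<sigma>))^2 = (1 - \<sigma>^2) * (1 - (norm t)^2)"
    unfolding cmod_power2 by (simp add: power2_eq_square) algebra
  moreover have "\<sigma>^2 < 1" and "(norm t)^2 < 1"
    using assms by (simp_all add: abs_square_less_1 power_less_one_iff)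
  then have "(1 - \<sigma>^2) * (1 - (norm t)^2) > 0" by simp
  ultimately show ?thesis by (smt (verit) norm_ge_zero power_mono)
qed

lemma extremal_disc_in_tetrablock:
  fixes w k \<zeta> D :: complex and \<sigma> :: real
  assumes w: "norm w = 1" and k: "norm k \<le> 1" and \<sigma>: "0 \<le> \<sigma>" "\<sigma> < 1" and \<zeta>: "norm \<zeta> < 1"
  defines "D \<equiv> 1 - w * \<sigma> * k * \<zeta>"
  shows "D \<noteq> 0"
    and "in_tetrablock ((1 - \<sigma>) * \<zeta> / D) (k * (1 - \<sigma>) * \<zeta> / D) (\<zeta> * (k * \<zeta> - cnj w * \<sigma>) / D)"
proof -
  define t where "t = w * k * \<zeta>"
  have t: "norm t \<le> norm \<zeta>"
    using w k by (simp add: t_def norm_mult mult_left_le_one_le)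
  have Dt: "D = 1 - \<sigma> * t" unfolding D_def t_def by (simp add: algebra_simps)
  have "norm (t - \<sigma>) < norm (1 - \<sigma> * t)"
    using \<sigma> t \<zeta> by (intro norm_diff_real_less) auto
  then show D: "D \<noteq> 0" unfolding Dt by auto
  have conj: "t - \<sigma> = w * (k * \<zeta> - cnj w * \<sigma>)"
    using unit_mult_cnj[OF w] by (simp add: t_def algebra_simps)
  have nc: "norm (\<zeta> * (k * \<zeta> - cnj w * \<sigma>)) = norm \<zeta> * norm (t - \<sigma>)"
    using w by (simp add: conj norm_mult)
  have "(1 - \<sigma>) * \<zeta> * (k * (1 - \<sigma>) * \<zeta>) - \<zeta> * (k * \<zeta> - cnj w * \<sigma>) * D
      = \<sigma> * \<zeta> * cnj w * (1 - t)^2"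
    using unit_mult_cnj[OF w] unfolding D_def t_def of_real_diff of_real_1 by algebra
  then have nab: "norm ((1 - \<sigma>) * \<zeta> * (k * (1 - \<sigma>) * \<zeta>) - \<zeta> * (k * \<zeta> - cnj w * \<sigma>) * D)
      = \<sigma> * norm \<zeta> * (norm (1 - t))^2"
    using w \<sigma> by (simp add: norm_mult norm_power abs_of_nonneg)
  have "norm (1 - complex_of_real \<sigma>) = 1 - \<sigma>"
    using \<sigma> norm_of_real[of "1 - \<sigma>"] by simp
  then have n1: "norm ((1 - \<sigma>) * \<zeta>) = (1 - \<sigma>) * norm \<zeta>"
    and n2: "norm (k * (1 - \<sigma>) * \<zeta>) = (1 - \<sigma>) * norm t"
    using w by (simp_all add: t_def norm_mult)
  show "in_tetrablock ((1 - \<sigma>) * \<zeta> / D) (k * (1 - \<sigma>) * \<zeta> / D) (\<zeta> * (k * \<zeta> - cnj w * \<sigma>) / D)"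
  proof (rule in_tetrablock_divide[OF D])
    show "norm (\<zeta> * (k * \<zeta> - cnj w * \<sigma>)) < norm D"
      unfolding nc Dt using \<open>norm (t - \<sigma>) < norm (1 - \<sigma> * t)\<close> \<zeta>
      by (metis order.strict_trans1 mult_left_le_one_le norm_ge_zero less_imp_le)
    show "2 * norm ((1 - \<sigma>) * \<zeta> * (k * (1 - \<sigma>) * \<zeta>) - \<zeta> * (k * \<zeta> - cnj w * \<sigma>) * D)
      < (norm D)^2 - (norm ((1 - \<sigma>) * \<zeta>))^2 - (norm (k * (1 - \<sigma>) * \<zeta>))^2
        + (norm (\<zeta> * (k * \<zeta> - cnj w * \<sigma>)))^2"
      unfolding nab n1 n2 nc unfolding Dt by (rule extremal_disc_inequality[OF \<sigma> \<zeta> t])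
  qed
qed

lemma norm_add_mult_unit_sq:
  fixes a z :: complex
  assumes "norm z = 1"
  shows "(norm (1 + a * z))^2 = 1 + (norm a)^2 + 2 * Re (a * z)"
proof -
  have "complex_of_real ((norm (1 + a * z))^2) = complex_of_real (1 + (norm a)^2) + (a * z + cnj (a * z))"
    unfolding complex_norm_square of_real_add of_real_1
    using unit_mult_cnj[OF assms] by (simp add: algebra_simps)
  then show ?thesis by (simp only: complex_add_cnj of_real_add[symmetric] of_real_eq_iff)
qed

lemma unit_aligned_mult_cnj:
  fixes K L z :: complex
  assumes K: "K \<noteq> 0" and zL: "L * z = complex_of_real (norm L / norm K) * K"
  shows "complex_of_real (norm K * norm L) * z = K * cnj L"
proof (cases "L = 0")
  case False
  have "complex_of_real ((norm L)^2) * z = cnj L * (L * z)"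
    unfolding complex_norm_square by (simp add: algebra_simps)
  also have "\<dots> = complex_of_real (norm L / norm K) * K * cnj L"
    unfolding zL by (simp add: algebra_simps)
  finally have h: "complex_of_real ((norm L)^2) * z = complex_of_real (norm L / norm K) * K * cnj L" .
  have "complex_of_real (norm K * norm L) * z
      = complex_of_real (norm K / norm L) * (complex_of_real ((norm L)^2) * z)"
    using False by (simp add: field_simps power2_eq_square)
  also have "\<dots> = K * cnj L"
    unfolding h using K False by (simp add: field_simps)
  finally show ?thesis .
qed simp

lemma extremal_disc_sigma_identity:
  fixes K L a z :: complex
  assumes z: "norm z = 1" and zK: "complex_of_real (norm K * norm L) * z = K * cnj L"
  shows "((norm K + norm L) * (1 - (norm a)^2) - norm L * (norm (1 + a * z))^2) * norm K
       = (norm (K - cnj a * L))^2 - (norm a)^2 * (norm K + norm L)^2"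
proof -
  have Re: "norm K * norm L * Re (a * z) = Re (a * K * cnj L)"
  proof -
    have "complex_of_real (norm K * norm L) * (a * z) = a * K * cnj L"
      using arg_cong[OF zK, of "(*) a"] by (simp only: ac_simps)
    then have "Re (complex_of_real (norm K * norm L) * (a * z)) = Re (a * K * cnj L)" by (rule arg_cong)
    then show ?thesis by simp
  qed
  have "complex_of_real ((norm (K - cnj a * L))^2)
      = complex_of_real ((norm K)^2 + (norm a)^2 * (norm L)^2) - (a * K * cnj L + cnj (a * K * cnj L))"
    unfolding complex_norm_square of_real_add of_real_mult by (simp add: algebra_simps)
  then have KL: "(norm (K - cnj a * L))^2 = (norm K)^2 + (norm a)^2 * (norm L)^2 - 2 * Re (a * K * cnj L)"
    by (simp only: complex_add_cnj of_real_diff[symmetric] of_real_eq_iff)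
  show ?thesis
    unfolding KL norm_add_mult_unit_sq[OF z] Re[symmetric] by (simp add: algebra_simps power2_eq_square)
qed

lemma extremal_disc_sigma_bound:
  fixes K L a z :: complex
  assumes K: "K \<noteq> 0" and z: "norm z = 1"
    and zL: "L * z = complex_of_real (norm L / norm K) * K"
    and gap: "norm a * (norm K + norm L) < norm (K - cnj a * L)"
  shows "norm L * (norm (1 + a * z))^2 < (norm K + norm L) * (1 - (norm a)^2)"
proof -
  have "0 < (norm (K - cnj a * L))^2 - (norm a)^2 * (norm K + norm L)^2"
    using gap by (simp add: power_strict_mono flip: power_mult_distrib)
  then have "((norm K + norm L) * (1 - (norm a)^2) - norm L * (norm (1 + a * z))^2) * norm K > 0"
    using extremal_disc_sigma_identity[OF z unit_aligned_mult_cnj[OF K zL], of a] by simp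
  then show ?thesis using K by (simp add: zero_less_mult_iff)
qed

(* In the coordinates a1 = K - cnj a L, a3 = a K - L of exists_tetrablock_coefficients:
   once L z is aligned with K, the extremal disc through (a1, a, a3) reaches it at K + L z,
   and w is the Moebius image of z. *)
lemma extremal_disc_parameters_aligned:
  fixes K L a z w :: complex and \<sigma> :: real
  assumes a: "norm a < 1" and K: "K \<noteq> 0" and z: "norm z = 1"
    and zL: "L * z = complex_of_real (norm L / norm K) * K"
    and gap: "norm a * (norm K + norm L) < norm (K - cnj a * L)"
  defines "w \<equiv> (z + cnj a) / (1 + a * z)"
    and "\<sigma> \<equiv> norm L * (norm (1 + a * z))^2 / ((norm K + norm L) * (1 - (norm a)^2))"
  shows "norm w = 1" and "0 \<le> \<sigma>" and "\<sigma> < 1" and "norm (K + L * z) = norm K + norm L"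
    and "(K + L * z) * (1 - w * a) = (K - cnj a * L) - w * (a * K - L)"
    and "\<sigma> * (K + L * z) * (1 - w * a) = (K + L * z) - (K - cnj a * L)"
proof -
  define T where "T = norm K + norm L"
  define d where "d = 1 - (norm a)^2"
  define P where "P = 1 + a * z"
  have T: "T > 0" using K by (simp add: T_def add_pos_nonneg)
  have d: "d > 0" using a by (simp add: d_def power_less_one_iff)
  have dc: "complex_of_real d = 1 - a * cnj a"
    unfolding d_def of_real_diff complex_norm_square by simp
  note m = unit_moebius[of a 1 z, unfolded of_real_1 mult_1 one_power2, OF a z, folded w_def P_def dc]
  show "norm w = 1" by (rule m(2))
  show "0 \<le> \<sigma>" unfolding \<sigma>_def using T d by (simp add: T_def d_def)
  have "norm L * (norm P)^2 < T * d"
    using extremal_disc_sigma_bound[OF K z zL gap] unfolding T_def d_def P_def .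
  then show "\<sigma> < 1"
    unfolding \<sigma>_def T_def[symmetric] d_def[symmetric] P_def[symmetric] using T d by simp
  have wa: "1 - w * a = complex_of_real d / P"
    using m(3) by (simp add: mult.commute)
  have Lw: "L * (w - cnj a) = L * z * (1 - w * a)"
    using m(4) unfolding wa by simp
  show E1: "(K + L * z) * (1 - w * a) = (K - cnj a * L) - w * (a * K - L)"
    using Lw by (simp add: algebra_simps)
  have Kz: "K + L * z = complex_of_real (T / norm K) * K"
    using K unfolding zL T_def by (simp add: field_simps)
  then show "norm (K + L * z) = norm K + norm L"
    using K T unfolding T_def by (simp only: norm_mult norm_of_real) (simp add: abs_of_pos)
  have "\<sigma> * (K + L * z) * (1 - w * a)
      = complex_of_real (norm L / norm K) * K * (complex_of_real ((norm P)^2) / P)"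
    unfolding Kz \<sigma>_def T_def[symmetric] d_def[symmetric] P_def[symmetric] wa
    using T d K m(1) by (simp add: field_simps)
  also have "\<dots> = L * z * cnj P"
    using m(1) unfolding zL complex_norm_square by simp
  also have "\<dots> = (K + L * z) - (K - cnj a * L)"
    using unit_mult_cnj[OF z] by (simp add: P_def algebra_simps)
  finally show "\<sigma> * (K + L * z) * (1 - w * a) = (K + L * z) - (K - cnj a * L)" .
qed

lemma exists_tetrablock_coefficients:
  fixes a1 a2 a3 :: complex
  assumes a2: "norm a2 < 1"
  obtains K L where "a1 = K - cnj a2 * L" and "a3 = a2 * K - L"
    and "sup_Psi 1 a1 a2 a3 = norm K + norm L"
proof -
  define d where "d = 1 - a2 * cnj a2"
  have dr: "d = complex_of_real (1 - (norm a2)^2)"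
    unfolding d_def of_real_diff complex_norm_square by simp
  have nd: "norm d = 1 - (norm a2)^2"
    unfolding dr norm_of_real using a2 by (simp add: power_less_one_iff abs_of_pos)
  have "0 < norm d" unfolding nd using a2 by (simp add: power_less_one_iff)
  then have d: "d \<noteq> 0" by auto
  define K where "K = (a1 - cnj a2 * a3) / d"
  define L where "L = (a1 * a2 - a3) / d"
  have "K - cnj a2 * L = ((a1 - cnj a2 * a3) - cnj a2 * (a1 * a2 - a3)) / d"
    unfolding K_def L_def using d by (simp add: field_simps)
  also have "\<dots> = a1 * d / d"
    by (rule arg_cong[where f="\<lambda>x. x / d"]) (simp add: d_def algebra_simps)
  finally have "a1 = K - cnj a2 * L" using d by simp
  moreover have "a2 * K - L = (a2 * (a1 - cnj a2 * a3) - (a1 * a2 - a3)) / d"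
    unfolding K_def L_def using d by (simp add: field_simps)
  moreover have "\<dots> = a3 * d / d"
    by (rule arg_cong[where f="\<lambda>x. x / d"]) (simp add: d_def algebra_simps)
  moreover have "sup_Psi 1 a1 a2 a3 = norm K + norm L"
    unfolding sup_Psi_def K_def L_def norm_divide nd by (simp add: add_divide_distrib)
  ultimately show ?thesis using that d by simp
qed

lemma extremal_disc_parameters:
  fixes a1 a2 a3 :: complex
  assumes a1: "a1 \<noteq> 0" and le: "norm a2 \<le> norm a1" and a2: "norm a2 < 1"
    and T: "sup_Psi 1 a1 a2 a3 < 1"
  obtains w \<zeta>0 :: complex and \<sigma> :: real
  where "norm w = 1" and "0 \<le> \<sigma>" and "\<sigma> < 1" and "norm \<zeta>0 = sup_Psi 1 a1 a2 a3"
    and "\<zeta>0 * (1 - w * a2) = a1 - w * a3" and "\<sigma> * \<zeta>0 * (1 - w * a2) = \<zeta>0 - a1"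
proof -
  obtain K L where a1K: "a1 = K - cnj a2 * L" and a3K: "a3 = a2 * K - L"
    and TKL: "sup_Psi 1 a1 a2 a3 = norm K + norm L"
    using exists_tetrablock_coefficients[OF a2] .
  have K: "K \<noteq> 0"
  proof
    assume "K = 0"
    then have "a1 = cnj a2 * a3" and "norm a3 < 1" using a1K a3K T TKL by auto
    then have "norm a1 \<le> norm a2 * norm a3" by (simp add: norm_mult)
    moreover have "norm a2 * norm a3 < norm a1"
    proof (cases "a2 = 0")
      case False
      then have "norm a2 * norm a3 < norm a2" using \<open>norm a3 < 1\<close> by simp
      then show ?thesis using le by linarith
    qed (use a1 in simp)
    ultimately show False by simp
  qed
  have gap: "norm a2 * (norm K + norm L) < norm (K - cnj a2 * L)"
  proof (cases "a2 = 0")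
    case False
    then have "norm a2 * (norm K + norm L) < norm a2" using T TKL by simp
    then show ?thesis using le a1K by simp
  qed (use a1 a1K in simp)
  obtain z where z: "norm z = 1" "L * z = complex_of_real (norm L / norm K) * K"
    using exists_unit_mult_aligned[OF K] by blast
  note KL = extremal_disc_parameters_aligned[OF a2 K z gap]
  show ?thesis
  proof (rule that[OF KL(1-3)])
    show "norm (K + L * z) = sup_Psi 1 a1 a2 a3"
      using KL(4) TKL by simp
    show "(K + L * z) * (1 - (z + cnj a2) / (1 + a2 * z) * a2) = a1 - (z + cnj a2) / (1 + a2 * z) * a3"
      using KL(5) unfolding a1K a3K .
    show "complex_of_real (norm L * (norm (1 + a2 * z))^2 / ((norm K + norm L) * (1 - (norm a2)^2)))
        * (K + L * z) * (1 - (z + cnj a2) / (1 + a2 * z) * a2) = K + L * z - a1"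
      using KL(6) unfolding a1K .
  qed
qed

lemma extremal_disc_interpolates:
  fixes w a1 a2 a3 \<zeta>0 D k :: complex and \<sigma> :: real
  assumes a1: "a1 \<noteq> 0" and \<sigma>: "\<sigma> < 1" and w: "norm w = 1"
    and E1: "\<zeta>0 * (1 - w * a2) = a1 - w * a3" and E2: "\<sigma> * \<zeta>0 * (1 - w * a2) = \<zeta>0 - a1"
  defines "k \<equiv> a2 / a1" and "D \<equiv> 1 - w * \<sigma> * k * \<zeta>0"
  shows "(1 - \<sigma>) * \<zeta>0 / D = a1" and "k * (1 - \<sigma>) * \<zeta>0 / D = a2"
    and "\<zeta>0 * (k * \<zeta>0 - cnj w * \<sigma>) / D = a3"
proof -
  have \<zeta>0: "\<zeta>0 \<noteq> 0" using E2 a1 by auto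
  have \<sigma>1: "1 - complex_of_real \<sigma> \<noteq> 0"
    using \<sigma> by (metis of_real_1 of_real_eq_iff right_minus_eq less_irrefl)
  have "a1 - \<sigma> * w * a2 * \<zeta>0 = (1 - \<sigma>) * \<zeta>0"
    using E2 by (simp add: algebra_simps)
  then have Dl: "D = (1 - \<sigma>) * \<zeta>0 / a1"
    unfolding D_def k_def using a1 by (simp add: field_simps)
  show G1: "(1 - \<sigma>) * \<zeta>0 / D = a1"
    unfolding Dl using \<zeta>0 \<sigma>1 a1 by simp
  have "k * (1 - \<sigma>) * \<zeta>0 / D = k * ((1 - \<sigma>) * \<zeta>0 / D)" by simp
  then show "k * (1 - \<sigma>) * \<zeta>0 / D = a2"
    unfolding G1 k_def using a1 by simp
  have "a2 * \<zeta>0 - a1 * cnj w * \<sigma> = a3 * (1 - \<sigma>)"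
    using E1 E2 unit_mult_cnj[OF w] unfolding of_real_diff of_real_1 by algebra
  moreover have "\<zeta>0 * (k * \<zeta>0 - cnj w * \<sigma>) / D = (a2 * \<zeta>0 - a1 * cnj w * \<sigma>) / (1 - \<sigma>)"
    unfolding Dl k_def using \<zeta>0 \<sigma>1 a1 by (simp add: field_simps)
  ultimately show "\<zeta>0 * (k * \<zeta>0 - cnj w * \<sigma>) / D = a3"
    using \<sigma>1 by simp
qed

definition tetrablock_disc :: "(complex \<Rightarrow> complex) \<Rightarrow> (complex \<Rightarrow> complex) \<Rightarrow> (complex \<Rightarrow> complex) \<Rightarrow> bool" where
  "tetrablock_disc G1 G2 G3 \<longleftrightarrow>
     G1 holomorphic_on ball 0 1 \<and> G2 holomorphic_on ball 0 1 \<and> G3 holomorphic_on ball 0 1 \<and>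
     (\<forall>\<zeta>\<in>ball 0 1. in_tetrablock (G1 \<zeta>) (G2 \<zeta>) (G3 \<zeta>)) \<and> G1 0 = 0 \<and> G2 0 = 0 \<and> G3 0 = 0"

lemma exists_tetrablock_disc_ordered:
  fixes a1 a2 a3 :: complex
  assumes le: "norm a2 \<le> norm a1" and a2: "norm a2 < 1" and T: "sup_Psi 1 a1 a2 a3 < 1"
  obtains G1 G2 G3 \<zeta>0 where "tetrablock_disc G1 G2 G3"
    and "G1 \<zeta>0 = a1" and "G2 \<zeta>0 = a2" and "G3 \<zeta>0 = a3" and "norm \<zeta>0 = sup_Psi 1 a1 a2 a3"
proof (cases "a1 = 0")
  case True
  then have "a2 = 0" using le by simp
  have "in_tetrablock 0 0 \<zeta>" if "norm \<zeta> < 1" for \<zeta>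
  proof -
    have "0 < (1 - norm \<zeta>)^2" using that by simp
    then show ?thesis using that unfolding in_tetrablock_def by (simp add: power2_eq_square algebra_simps)
  qed
  then have "tetrablock_disc (\<lambda>_. 0) (\<lambda>_. 0) (\<lambda>\<zeta>. \<zeta>)"
    unfolding tetrablock_disc_def by simp
  then show ?thesis
    using that[of "\<lambda>_. 0" "\<lambda>_. 0" "\<lambda>\<zeta>. \<zeta>" a3] True \<open>a2 = 0\<close> by (simp add: sup_Psi_def)
next
  case a1: False
  obtain w \<zeta>0 :: complex and \<sigma> :: real where w: "norm w = 1" and \<sigma>: "0 \<le> \<sigma>" "\<sigma> < 1"
    and \<zeta>0: "norm \<zeta>0 = sup_Psi 1 a1 a2 a3"
    and E1: "\<zeta>0 * (1 - w * a2) = a1 - w * a3" and E2: "\<sigma> * \<zeta>0 * (1 - w * a2) = \<zeta>0 - a1"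
    using extremal_disc_parameters[OF a1 le a2 T] by blast
  define k where "k = a2 / a1"
  have k: "norm k \<le> 1" unfolding k_def using a1 le by (simp add: norm_divide divide_le_eq_1)
  define D where "D = (\<lambda>\<zeta>::complex. 1 - w * \<sigma> * k * \<zeta>)"
  define G1 where "G1 = (\<lambda>\<zeta>::complex. (1 - \<sigma>) * \<zeta> / D \<zeta>)"
  define G2 where "G2 = (\<lambda>\<zeta>::complex. k * (1 - \<sigma>) * \<zeta> / D \<zeta>)"
  define G3 where "G3 = (\<lambda>\<zeta>::complex. \<zeta> * (k * \<zeta> - cnj w * \<sigma>) / D \<zeta>)"
  note disc = extremal_disc_in_tetrablock[OF w k \<sigma>]
  have "\<And>\<zeta>. \<zeta> \<in> ball 0 1 \<Longrightarrow> D \<zeta> \<noteq> 0" using disc(1) by (simp add: D_def)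
  then have "tetrablock_disc G1 G2 G3"
    unfolding tetrablock_disc_def G1_def G2_def G3_def using disc(2)
    by (auto simp: D_def intro!: holomorphic_intros)
  moreover note extremal_disc_interpolates[OF a1 \<sigma>(2) w E1 E2, folded k_def]
  ultimately show ?thesis
    using that[of G1 G2 G3 \<zeta>0] \<zeta>0 unfolding G1_def G2_def G3_def D_def by blast
qed

lemma exists_tetrablock_disc:
  fixes a1 a2 a3 :: complex
  assumes "norm a1 < 1" and "norm a2 < 1"
    and "sup_Psi 1 a1 a2 a3 < 1" and "sup_Psi 1 a2 a1 a3 < 1"
  obtains G1 G2 G3 \<zeta>0 where "tetrablock_disc G1 G2 G3"
    and "G1 \<zeta>0 = a1" and "G2 \<zeta>0 = a2" and "G3 \<zeta>0 = a3"
    and "norm \<zeta>0 = sup_Psi 1 a1 a2 a3 \<or> norm \<zeta>0 = sup_Psi 1 a2 a1 a3"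
proof (cases "norm a2 \<le> norm a1")
  case True
  then show ?thesis using exists_tetrablock_disc_ordered[OF True assms(2,3)] that by metis
next
  case False
  then obtain G1 G2 G3 \<zeta>0 where "tetrablock_disc G2 G1 G3"
    and "G2 \<zeta>0 = a2" and "G1 \<zeta>0 = a1" and "G3 \<zeta>0 = a3" and "norm \<zeta>0 = sup_Psi 1 a2 a1 a3"
    using exists_tetrablock_disc_ordered[of a1 a2 a3] assms(1,4) by (metis linear)
  moreover have "tetrablock_disc G1 G2 G3"
    using calculation(1) unfolding tetrablock_disc_def by (auto simp: in_tetrablock_commute)
  ultimately show ?thesis using that by blast
qed

section \<open>The domain G~_n\<close>

lemma Gtilde_obtain_beta:
  assumes "z \<in> Gtilde n idx" and j: "j \<in> {1..n-1}"
  obtains b1 b2 where "coord idx z j = b1 + cnj b2 * coord idx z n"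
    and "coord idx z (n - j) = b2 + cnj b1 * coord idx z n"
    and "norm b1 + norm b2 < real (n choose j)" and "norm (coord idx z n) < 1"
proof -
  obtain \<beta> where q: "norm (coord idx z n) < 1"
    and \<beta>: "\<forall>j\<in>{1..n-1}. coord idx z j = \<beta> j + cnj (\<beta> (n - j)) * coord idx z n \<and>
                           norm (\<beta> j) + norm (\<beta> (n - j)) < real (n choose j)"
    using assms(1) unfolding Gtilde_def by blast
  have "n - j \<in> {1..n-1}" and "n - (n - j) = j" using j by auto
  then show ?thesis
    using that[of "\<beta> j" "\<beta> (n - j)"] \<beta> j q by auto
qed

lemma norm_coord_Gtilde_less:
  assumes "z \<in> Gtilde n idx" and "j \<in> {1..n-1}"
  shows "norm (coord idx z j) < real (n choose j)"
  using Gtilde_obtain_beta[OF assms] norm_add_cnj_mult_less by metis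

lemma Gtilde_sup_Psi_less_1:
  assumes "y \<in> Gtilde n idx" and "j \<in> {1..n-1}"
  shows "sup_Psi (n choose j) (coord idx y j) (coord idx y (n - j)) (coord idx y n) < 1"
  using Gtilde_obtain_beta[OF assms] sup_Psi_less_1 by metis

lemma caratheodory_Gtilde_ge_sup_Psi:
  assumes y: "y \<in> Gtilde n idx" and j: "j \<in> {1..n-1}"
  shows "ereal (artanh (sup_Psi (n choose j) (coord idx y j) (coord idx y (n - j)) (coord idx y n)))
       \<le> caratheodory (Gtilde n idx) 0 y"
proof -
  define c where "c = real (n choose j)"
  have nj: "n - j \<in> {1..n-1}" and "n choose (n - j) = n choose j"
    using j binomial_symmetric[of j n] by auto
  then have "norm (coord idx y (n - j)) < c"
    using norm_coord_Gtilde_less[OF y nj] unfolding c_def by simp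
  then obtain \<omega> where \<omega>: "norm \<omega> = 1"
    and y\<omega>: "norm (Psi c \<omega> (coord idx y j) (coord idx y (n - j)) (coord idx y n))
              = sup_Psi c (coord idx y j) (coord idx y (n - j)) (coord idx y n)"
    by (rule exists_unit_norm_Psi_eq_sup_Psi)
  define f where "f z = Psi c \<omega> (coord idx z j) (coord idx z (n - j)) (coord idx z n)" for z :: "complex^'a"
  have "coord idx z (n - j) * \<omega> - c \<noteq> 0 \<and> f z \<in> ball 0 1" if z: "z \<in> Gtilde n idx" for z
  proof -
    obtain b1 b2 where "coord idx z j = b1 + cnj b2 * coord idx z n"
      and "coord idx z (n - j) = b2 + cnj b1 * coord idx z n"
      and "norm b1 + norm b2 < c" and "norm (coord idx z n) < 1"
      using Gtilde_obtain_beta[OF z j] unfolding c_def by blast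
    with norm_Psi_less_1[OF _ _ \<omega>] show ?thesis unfolding f_def by simp
  qed
  then have "holo_on f (Gtilde n idx)" and "f ` Gtilde n idx \<subseteq> ball 0 1"
    unfolding holo_on_iff_holo_at f_def Psi_def coord_def
    by (auto intro!: holo_at_divide holo_at_diff holo_at_mult holo_at_const holo_at_component)
  then have "ereal (hrho (f 0) (f y)) \<le> caratheodory (Gtilde n idx) 0 y"
    by (rule hrho_le_caratheodory)
  moreover have "f 0 = 0" by (simp add: f_def Psi_def coord_def)
  ultimately show ?thesis using y\<omega> by (simp add: f_def hrho_0 c_def)
qed

definition lift_coord :: "nat \<Rightarrow> complex \<Rightarrow> complex \<Rightarrow> complex \<Rightarrow> nat \<Rightarrow> complex" where
  "lift_coord n u v q j =
     (if j = n then q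
      else cbin n j * (if 2 * j < n then u else if n < 2 * j then v else (u + v) / 2))"

definition tetrablock_lift :: "nat \<Rightarrow> ('n \<Rightarrow> nat) \<Rightarrow> complex \<Rightarrow> complex \<Rightarrow> complex \<Rightarrow> complex^'n" where
  "tetrablock_lift n idx u v q = (\<chi> i. lift_coord n u v q (idx i))"

lemma coord_tetrablock_lift:
  assumes "bij_betw idx (UNIV :: 'n set) {1..n}" and "j \<in> {1..n}"
  shows "coord idx (tetrablock_lift n idx u v q :: complex^'n) j = lift_coord n u v q j"
  using bij_betw_inv_into_right[OF assms] unfolding coord_def tetrablock_lift_def by simp

lemma tetrablock_lift_0: "tetrablock_lift n idx 0 0 0 = 0"
  by (simp add: tetrablock_lift_def lift_coord_def vec_eq_iff)

lemma holo_curve_tetrablock_lift: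
  assumes "G1 holomorphic_on S" and "G2 holomorphic_on S" and "G3 holomorphic_on S"
  shows "holo_curve_on (\<lambda>\<zeta>. tetrablock_lift n idx (G1 \<zeta>) (G2 \<zeta>) (G3 \<zeta>)) S"
proof -
  have "(\<lambda>\<zeta>. lift_coord n (G1 \<zeta>) (G2 \<zeta>) (G3 \<zeta>) j) holomorphic_on S" for j
    using assms unfolding lift_coord_def
    by (cases "j = n"; cases "2 * j < n"; cases "n < 2 * j") (auto intro!: holomorphic_intros)
  then show ?thesis unfolding holo_curve_on_def tetrablock_lift_def by simp
qed

lemma lift_coord_beta:
  assumes j: "j \<in> {1..n-1}"
  shows "lift_coord n (B1 + cnj B2 * q) (B2 + cnj B1 * q) q j
       = lift_coord n B1 B2 0 j + cnj (lift_coord n B1 B2 0 (n - j)) * q"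
proof -
  have "j \<le> n" using j by auto
  then have "cbin n (n - j) = cbin n j"
    by (simp add: cbin_def binomial_symmetric[symmetric])
  then show ?thesis
    using j unfolding lift_coord_def cbin_def
    by (cases "2 * j < n"; cases "n < 2 * j") (auto simp: algebra_simps add_divide_distrib)
qed

lemma norm_lift_coord_add_less:
  assumes j: "j \<in> {1..n-1}" and B: "norm B1 + norm B2 < 1"
  shows "norm (lift_coord n B1 B2 0 j) + norm (lift_coord n B1 B2 0 (n - j)) < real (n choose j)"
proof -
  have c: "real (n choose j) > 0" and cs: "n choose (n - j) = n choose j"
    using j binomial_symmetric[of j n] by auto
  have "norm (lift_coord n B1 B2 0 j) + norm (lift_coord n B1 B2 0 (n - j))
      \<le> real (n choose j) * (norm B1 + norm B2)"
  proof (cases "2 * j = n")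
    case True
    then have "n - j = j" by auto
    then show ?thesis
      using True j c norm_triangle_ineq[of B1 B2]
      by (simp add: lift_coord_def cbin_def norm_mult norm_divide)
  next
    case False
    then show ?thesis
      using j cs by (auto simp: lift_coord_def cbin_def norm_mult algebra_simps)
  qed
  also have "\<dots> < real (n choose j)" using B c by simp
  finally show ?thesis .
qed

lemma tetrablock_lift_in_Gtilde:
  assumes bij: "bij_betw idx (UNIV :: 'n set) {1..n}" and n: "1 \<le> n" and "in_tetrablock u v q"
  shows "(tetrablock_lift n idx u v q :: complex^'n) \<in> Gtilde n idx"
proof -
  obtain B1 B2 where u: "u = B1 + cnj B2 * q" and v: "v = B2 + cnj B1 * q" and B: "norm B1 + norm B2 < 1"
    using in_tetrablock_obtain_beta[OF assms(3)] .
  have q: "norm q < 1" using assms(3) unfolding in_tetrablock_def by simp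
  have cn: "coord idx (tetrablock_lift n idx u v q :: complex^'n) n = q"
    using coord_tetrablock_lift[OF bij, of n] n by (simp add: lift_coord_def)
  show ?thesis
    unfolding Gtilde_def
  proof (intro CollectI conjI exI ballI)
    show "norm (coord idx (tetrablock_lift n idx u v q :: complex^'n) n) < 1" using cn q by simp
  next
    fix j assume j: "j \<in> {1..n-1}"
    then have "j \<in> {1..n}" by auto
    then have "coord idx (tetrablock_lift n idx u v q :: complex^'n) j = lift_coord n u v q j"
      by (rule coord_tetrablock_lift[OF bij])
    also have "\<dots> = lift_coord n B1 B2 0 j + cnj (lift_coord n B1 B2 0 (n - j)) * q"
      unfolding u v by (rule lift_coord_beta[OF j])
    finally show "coord idx (tetrablock_lift n idx u v q :: complex^'n) j
        = lift_coord n B1 B2 0 j + cnj (lift_coord n B1 B2 0 (n - j)) * coord idx (tetrablock_lift n idx u v q) n"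
      unfolding cn .
    show "norm (lift_coord n B1 B2 0 j) + norm (lift_coord n B1 B2 0 (n - j)) < real (n choose j)"
      using norm_lift_coord_add_less[OF j B] .
  qed
qed

lemma Jset_coord_lower:
  assumes y: "y \<in> Jset n idx" and k: "2 \<le> k" "2 * k < n"
  shows "coord idx y k = cbin n k / of_nat n * coord idx y 1"
    and "coord idx y (n - k) = cbin n k / of_nat n * coord idx y (n - 1)"
proof -
  have "k \<in> (if odd n then {2..n div 2} else {2..n div 2 - 1})" using k by auto
  then have "coord idx y k = cbin n k / of_nat n * coord idx y 1 \<and>
      coord idx y (n - k) = cbin n k / of_nat n * coord idx y (n - 1)"
    using y unfolding Jset_def by (auto split: if_splits)
  then show "coord idx y k = cbin n k / of_nat n * coord idx y 1"
    and "coord idx y (n - k) = cbin n k / of_nat n * coord idx y (n - 1)" by auto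
qed

lemma Jset_coord:
  assumes n: "3 \<le> n" and y: "y \<in> Jset n idx" and j: "j \<in> {1..n-1}"
  shows "coord idx y j = lift_coord n (coord idx y 1 / n) (coord idx y (n - 1) / n) (coord idx y n) j"
proof -
  have n0: "(of_nat n :: complex) \<noteq> 0" using n by simp
  have jn: "j \<noteq> n" and c1: "cbin n 1 = of_nat n" and cn1: "cbin n (n - 1) = of_nat n"
    using j n binomial_symmetric[of 1 n] by (auto simp: cbin_def)
  consider "2 * j < n" | "n < 2 * j" | "2 * j = n" by linarith
  then show ?thesis
  proof cases
    case 1
    then show ?thesis
      using Jset_coord_lower(1)[OF y _ 1] j jn n0 c1
      by (cases "j = 1") (auto simp: lift_coord_def)
  next
    case 2
    define k where "k = n - j"
    have k: "2 * k < n" "n - k = j" "1 \<le> k" and ck: "cbin n k = cbin n j"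
      using 2 j binomial_symmetric[of j n] by (auto simp: k_def cbin_def)
    show ?thesis
      using Jset_coord_lower(2)[OF y _ k(1)] k ck 2 jn n0 cn1
      by (cases "k = 1") (auto simp: lift_coord_def)
  next
    case 3
    then have "\<not> odd n" "j = n div 2" by auto
    then show ?thesis
      using y jn 3 n0 unfolding Jset_def lift_coord_def by (simp add: field_simps)
  qed
qed

lemma Jset_eq_tetrablock_lift:
  assumes n: "3 \<le> n" and bij: "bij_betw idx (UNIV :: 'n set) {1..n}" and y: "y \<in> Jset n idx"
  shows "tetrablock_lift n idx (coord idx y 1 / n) (coord idx y (n - 1) / n) (coord idx y n) = (y :: complex^'n)"
proof (subst vec_eq_iff, intro allI)
  fix i
  have i: "idx i \<in> {1..n}" using bij by (auto dest: bij_betwE)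
  have "y $ i = coord idx y (idx i)"
    using bij unfolding coord_def by (simp add: bij_betw_def inv_into_f_f)
  moreover have "lift_coord n (coord idx y 1 / n) (coord idx y (n - 1) / n) (coord idx y n) (idx i)
      = coord idx y (idx i)"
    using Jset_coord[OF n y, of "idx i"] i by (cases "idx i = n") (auto simp: lift_coord_def)
  ultimately show "tetrablock_lift n idx (coord idx y 1 / n) (coord idx y (n - 1) / n) (coord idx y n) $ i = y $ i"
    by (simp add: tetrablock_lift_def)
qed

lemma lempert_Gtilde_le_tetrablock_disc:
  assumes bij: "bij_betw idx (UNIV :: 'n set) {1..n}" and n: "1 \<le> n"
    and disc: "tetrablock_disc G1 G2 G3" and \<zeta>0: "norm \<zeta>0 < 1"
  shows "lempert (Gtilde n idx) 0 (tetrablock_lift n idx (G1 \<zeta>0) (G2 \<zeta>0) (G3 \<zeta>0) :: complex^'n)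
       \<le> ereal (artanh (norm \<zeta>0))"
proof -
  define Y where "Y \<zeta> = (tetrablock_lift n idx (G1 \<zeta>) (G2 \<zeta>) (G3 \<zeta>) :: complex^'n)" for \<zeta>
  have "lempert (Gtilde n idx) 0 (Y \<zeta>0) \<le> ereal (hrho 0 \<zeta>0)"
  proof (rule lempert_le_hrho)
    show "holo_curve_on Y (ball 0 1)"
      using disc unfolding tetrablock_disc_def Y_def by (intro holo_curve_tetrablock_lift) auto
    show "Y ` ball 0 1 \<subseteq> Gtilde n idx"
      using disc n unfolding tetrablock_disc_def Y_def by (auto intro!: tetrablock_lift_in_Gtilde[OF bij])
    show "Y 0 = 0" using disc tetrablock_lift_0 unfolding tetrablock_disc_def Y_def by simp
  qed (use \<zeta>0 in simp_all)
  then show ?thesis unfolding Y_def hrho_0 .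
qed

lemma lempert_Jset_le_sup_Psi:
  assumes n: "3 \<le> n" and bij: "bij_betw idx (UNIV :: 'n set) {1..n}" and y: "(y :: complex^'n) \<in> Jset n idx"
  shows "\<exists>j\<in>{1, n - 1}. lempert (Gtilde n idx) 0 y
           \<le> ereal (artanh (sup_Psi (n choose j) (coord idx y j) (coord idx y (n - j)) (coord idx y n)))"
proof -
  have yG: "y \<in> Gtilde n idx" using y by (simp add: Jset_def)
  have j1: "1 \<in> {1..n-1}" and jn: "n - 1 \<in> {1..n-1}" and nn: "n - (n - 1) = 1"
    and cn: "n choose (n - 1) = n" and n0: "real n > 0"
    using n binomial_symmetric[of 1 n] by auto
  define a1 a2 a3 where "a1 = coord idx y 1 / n" and "a2 = coord idx y (n - 1) / n" and "a3 = coord idx y n"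
  have y12: "coord idx y 1 = complex_of_real n * a1" "coord idx y (n - 1) = complex_of_real n * a2"
    using n0 by (simp_all add: a1_def a2_def)
  have a12: "norm a1 < 1" "norm a2 < 1"
    using norm_coord_Gtilde_less[OF yG j1] norm_coord_Gtilde_less[OF yG jn, unfolded cn] n0
    by (simp_all add: a1_def a2_def norm_divide)
  have T1: "sup_Psi (n choose 1) (coord idx y 1) (coord idx y (n - 1)) (coord idx y n) = sup_Psi 1 a1 a2 a3"
    and T2: "sup_Psi (n choose (n - 1)) (coord idx y (n - 1)) (coord idx y (n - (n - 1))) (coord idx y n)
           = sup_Psi 1 a2 a1 a3"
    unfolding nn cn y12 a3_def using sup_Psi_scale[OF n0] by simp_all
  have T12: "sup_Psi 1 a1 a2 a3 < 1" "sup_Psi 1 a2 a1 a3 < 1"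
    using Gtilde_sup_Psi_less_1[OF yG j1] Gtilde_sup_Psi_less_1[OF yG jn] unfolding T1 T2 by simp_all
  obtain G1 G2 G3 \<zeta>0 where disc: "tetrablock_disc G1 G2 G3"
    and at: "G1 \<zeta>0 = a1" "G2 \<zeta>0 = a2" "G3 \<zeta>0 = a3"
    and \<zeta>0: "norm \<zeta>0 = sup_Psi 1 a1 a2 a3 \<or> norm \<zeta>0 = sup_Psi 1 a2 a1 a3"
    using exists_tetrablock_disc[OF a12 T12] by blast
  have "y = tetrablock_lift n idx (G1 \<zeta>0) (G2 \<zeta>0) (G3 \<zeta>0)"
    using Jset_eq_tetrablock_lift[OF n bij y] at unfolding a1_def a2_def a3_def by simp
  moreover have "norm \<zeta>0 < 1" using \<zeta>0 T12 by auto
  ultimately have "lempert (Gtilde n idx) 0 y \<le> ereal (artanh (norm \<zeta>0))"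
    using lempert_Gtilde_le_tetrablock_disc[OF bij _ disc] n by simp
  then have "lempert (Gtilde n idx) 0 y \<le> ereal (artanh (sup_Psi 1 a1 a2 a3))
      \<or> lempert (Gtilde n idx) 0 y \<le> ereal (artanh (sup_Psi 1 a2 a1 a3))"
    using \<zeta>0 by auto
  then show ?thesis unfolding T1[symmetric] T2[symmetric] by blast
qed

theorem mainTheorem20:
  fixes n :: nat and idx :: "'n::finite \<Rightarrow> nat" and y :: "complex^'n"
  assumes "n \<ge> 3"
    and "bij_betw idx (UNIV :: 'n set) {1..n}"
    and "y \<in> Jset n idx"
  shows "caratheodory (Gtilde n idx) 0 y = lempert (Gtilde n idx) 0 y
    \<and> lempert (Gtilde n idx) 0 y =
      ereal (Max ((\<lambda>j. artanh
        ((real (n choose j) * norm (coord idx y j - cnj (coord idx y (n - j)) * coord idx y n)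
          + norm (coord idx y j * coord idx y (n - j) - (cbin n j)^2 * coord idx y n))
         / ((real (n choose j))^2 - (norm (coord idx y (n - j)))^2))) ` {1..n-1}))"
proof -
  define S where "S = (\<lambda>j. artanh (sup_Psi (n choose j) (coord idx y j) (coord idx y (n - j)) (coord idx y n))) ` {1..n-1}"
  have S_eq: "(\<lambda>j. artanh
        ((real (n choose j) * norm (coord idx y j - cnj (coord idx y (n - j)) * coord idx y n)
          + norm (coord idx y j * coord idx y (n - j) - (cbin n j)^2 * coord idx y n))
         / ((real (n choose j))^2 - (norm (coord idx y (n - j)))^2))) ` {1..n-1} = S"
    unfolding S_def sup_Psi_def cbin_def by simp
  have yG: "y \<in> Gtilde n idx" using assms(3) by (simp add: Jset_def)
  have fin: "finite S" and ne: "S \<noteq> {}" using assms(1) by (auto simp: S_def)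
  obtain j where "j \<in> {1..n-1}" and "Max S = artanh (sup_Psi (n choose j) (coord idx y j) (coord idx y (n - j)) (coord idx y n))"
    using Max_in[OF fin ne] unfolding S_def by blast
  then have CM: "ereal (Max S) \<le> caratheodory (Gtilde n idx) 0 y"
    using caratheodory_Gtilde_ge_sup_Psi[OF yG] by simp
  obtain j' where "j' \<in> {1, n - 1}" and "lempert (Gtilde n idx) 0 y \<le>
      ereal (artanh (sup_Psi (n choose j') (coord idx y j') (coord idx y (n - j')) (coord idx y n)))"
    using lempert_Jset_le_sup_Psi[OF assms] by blast
  moreover have "j' \<in> {1..n-1}" using \<open>j' \<in> {1, n - 1}\<close> assms(1) by auto
  ultimately have LM: "lempert (Gtilde n idx) 0 y \<le> ereal (Max S)"
    using Max_ge[OF fin] unfolding S_def by (meson ereal_less_eq(3) image_eqI order_trans)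
  show ?thesis
    unfolding S_eq using CM LM caratheodory_le_lempert[of "Gtilde n idx" 0 y] by auto
qed

end
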